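(* Let $\Delta=(\mathcal{D},\delta)$ be a program over a clocked basic action theory $\mathcal{D}$, let $K\in\mathbb{N}$ be at least as large as every natural-number constant mentioned in $\mathcal{D}$, and let $\mathcal{T}_\Delta$ be the transition system constructed by Algorithm 2 (described in the context) on input $(\mathcal{D},\delta,K)$. Then $\mathcal{T}_\Delta$ has finitely many states.
   Context: Situation calculus setting: sorts action, situation, object and time (the real numbers); $S_0$ initial situation; $\mathit{do}(a,s)$ the successor situation; $\phi[\sigma]$ is the situation-suppressed formula $\phi$ with situation argument $\sigma$ restored. Fluents are relation or function symbols with last argument a situation and other arguments objects; finitely many fluents, a finite set $\mathcal{A}$ of action types ($A$ has $|A|$ object arguments), finite set $\mathcal{O}$ of object constants (unique names, domain closure). A formula is uniform in $s$ if it mentions no situation term other than $s$ and does not mention $\mathit{Poss}$. A BAT is $\mathcal{D} = \mathcal{D}_0 \cup \mathcal{D}_{poss} \cup \mathcal{D}_{ssa} \cup \mathcal{D}_{ca} \cup \mathcal{D}_{co} \cup \Sigma$ (initial description uniform in $S_0$ with complete information, precondition axioms, successor state axioms, domain closure and unique name axioms for actions and objects, foundational axioms). Clock comparison: $f(\vec x,s)\bowtie v$ or $v\bowtie v'$ ($f$ functional fluent, $v,v'\in\mathbb{N}$, $\bowtie\in\{<,\leq,=,\geq,>\}$). Clocked formula: every atomic subformula mentioning a time term is a clock comparison; time-independent: no time term. A BAT is clocked if there is a distinguished action type $\mathit{wait}(t)$ (others have no time argument) and: functional fluents take time values and are $0$ at $S_0$; each functional fluent has successor state axiom $f(\vec o,\mathit{do}(a,s))=y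 \equiv \exists t\,(a=\mathit{wait}(t)\wedge y=f(\vec o,s)+t) \vee (\neg\exists t\, a=\mathit{wait}(t)) \wedge (\phi_f(\vec o,a,s)\wedge y=0 \vee \neg\phi_f(\vec o,a,s)\wedge y=f(\vec o,s))$ with $\phi_f$ time-independent, uniform in $s$; relational successor state axioms and precondition axioms have clocked right-hand sides uniform in $s$; $\mathit{Poss}(\mathit{wait}(t),s)\equiv\top$. $\mathcal{C}$ is the set of ground situation-suppressed clock (functional fluent) terms; $\nu_\sigma(\omega)=\tau$ iff $\mathcal{D}\models\omega[\sigma]=\tau$; $\nu+\tau$ adds $\tau$ to every value. For $u,v\geq0$: $u\sim_K v$ iff both $>K$, or both $\leq K$ with equal floors and equal ceilings; $\mathrm{fract}(v)=v-\lfloor v\rfloor$ if $v\leq K$, else $0$. $\nu\cong_K\nu'$ iff $\nu(\omega)\sim_K\nu'(\omega)$ for all $\omega$ and $\mathrm{fract}(\nu(\omega))\leq\mathrm{fract}(\nu(\omega'))$ iff $\mathrm{fract}(\nu'(\omega))\leq\mathrm{fract}(\nu'(\omega'))$ for all $\omega,\omega'$. $\sigma_1\approx_{\mathcal{D}K}\sigma_2$ iff they entail the same ground relational fluent atoms and $\nu_{\sigma_1}\cong_K\nu_{\sigma_2}$; $[\sigma]_{\approx_{\mathcal{D}K}}$ is the class of $\sigma$. $\mathrm{TSuccs}(\nu,K)$ is a computable finite set of nonnegative reals such that for every $\tau\geq0$ there is $\tau'\in\mathrm{TSuccs}(\nu,K)$ with $\nu+\tau\cong_K\nu+\tau'$.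 Golog: program expressions $\delta ::= \alpha \mid \phi? \mid \delta;\delta \mid \delta|\delta \mid \pi x.\,\delta \mid \delta^* \mid \delta\|\delta$, where action terms are time-suppressed (the program contains $\mathit{wait}()$ without argument), tests test situation-suppressed clocked formulas, and $\pi x$ chooses an object. $\mathit{nil}:=\mathrm{True}?$. A program is $\Delta=(\mathcal{D},\delta)$. Transition semantics: $\mathrm{Trans}(A(\vec\rho),s,a,\delta',s')\equiv a=A(\vec\rho)\wedge\mathit{Poss}(a,s)\wedge\delta'=\mathit{nil}\wedge s'=\mathit{do}(a,s)$ for $A\neq\mathit{wait}$; $\mathrm{Trans}(\mathit{wait}(),s,a,\delta',s')\equiv\exists t.\,a=\mathit{wait}(t)\wedge\delta'=\mathit{nil}\wedge s'=\mathit{do}(a,s)$; $\mathrm{Trans}(\phi?,\dots)\equiv\mathrm{False}$; $\mathrm{Trans}(\delta_1;\delta_2,s,a,\delta',s')\equiv\exists\gamma(\delta'=(\gamma;\delta_2)\wedge\mathrm{Trans}(\delta_1,s,a,\gamma,s'))\vee\mathrm{Final}(\delta_1,s)\wedge\mathrm{Trans}(\delta_2,s,a,\delta',s')$; $\mathrm{Trans}(\delta_1|\delta_2,\dots)\equiv\mathrm{Trans}(\delta_1,\dots)\vee\mathrm{Trans}(\delta_2,\dots)$; $\mathrm{Trans}(\pi x.\delta,s,a,\delta',s')\equiv\exists v.\,\mathrm{Trans}(\delta^x_v,s,a,\delta',s')$; $\mathrm{Trans}(\delta^*,s,a,\delta',s')\equiv\exists\gamma(\delta'=(\gamma;\delta^*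 )\wedge\mathrm{Trans}(\delta,s,a,\gamma,s'))$; $\mathrm{Trans}(\delta_1\|\delta_2,s,a,\delta',s')\equiv\exists\gamma(\delta'=(\gamma\|\delta_2)\wedge\mathrm{Trans}(\delta_1,s,a,\gamma,s'))\vee\exists\gamma(\delta'=(\delta_1\|\gamma)\wedge\mathrm{Trans}(\delta_2,s,a,\gamma,s'))$. $\mathrm{Final}(\alpha,s)\equiv\mathrm{False}$; $\mathrm{Final}(\phi?,s)\equiv\phi[s]$; $\mathrm{Final}(\delta_1;\delta_2,s)\equiv\mathrm{Final}(\delta_1,s)\wedge\mathrm{Final}(\delta_2,s)$; $\mathrm{Final}(\delta_1|\delta_2,s)\equiv\mathrm{Final}(\delta_1,s)\vee\mathrm{Final}(\delta_2,s)$; $\mathrm{Final}(\pi x.\delta,s)\equiv\exists v.\,\mathrm{Final}(\delta^x_v,s)$; $\mathrm{Final}(\delta^*,s)\equiv\mathrm{True}$; $\mathrm{Final}(\delta_1\|\delta_2,s)\equiv\mathrm{Final}(\delta_1,s)\wedge\mathrm{Final}(\delta_2,s)$. Algorithm 2 (input $\mathcal{D},\delta_0,K$): set $\mathit{Open}:=\{(S_0,\delta_0)\}$, $V:=\emptyset$, $E:=\emptyset$. While $\mathit{Open}\neq\emptyset$: remove some $(\sigma,\delta)$ from $\mathit{Open}$; let $\mathit{Acts}:=\{A(\vec\rho)\mid A\in\mathcal{A}\setminus\{\mathit{wait}\},\vec\rho\in\mathcal{O}^{|A|}\}\cup\{\mathit{wait}(\tau)\mid\tau\in\mathrm{TSuccs}(\nu_\sigma,K)\}$;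 for each $\alpha\in\mathit{Acts}$ and each $(\delta',\sigma')$ with $\mathcal{D}\models\mathrm{Trans}(\delta,\sigma,\alpha,\delta',\sigma')$: if $([\sigma']_{\approx_{\mathcal{D}K}},\delta')\notin V$, add it to $V$ and add $(\sigma',\delta')$ to $\mathit{Open}$; add the edge $(([\sigma]_{\approx_{\mathcal{D}K}},\delta),([\sigma']_{\approx_{\mathcal{D}K}},\delta'))$ to $E$. Return $(V,([S_0]_{\approx_{\mathcal{D}K}},\delta_0),E)$; its states are the elements of $V$ together with the initial state. *)

theory Defs
  imports Main "HOL.Real"
begin

section \<open>Syntax: object terms and clocked formulas (situation-suppressed)\<close>

text \<open>Object constants are the elements of a finite type 'o (domain closure and
unique names for objects are thereby built in).  Object variables are natural numbers.\<close>

datatype 'o otrm = Var nat | Obj 'o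

datatype cmp = CLt | CLe | CEq | CGe | CGt

text \<open>Clocked formulas over relational fluents 'f and functional (clock) fluents 'g.
 Atoms mentioning time terms are exactly clock comparisons  f(x) cmp v  and  v cmp v'
 with natural number constants v, v'.\<close>

datatype ('o,'f,'g) cform =
    TT
  | RAtom 'f "'o otrm list"
  | EqO "'o otrm" "'o otrm"
  | Clk 'g "'o otrm list" cmp nat
  | NatCmp cmp nat nat
  | Neg "('o,'f,'g) cform"
  | Conj "('o,'f,'g) cform" "('o,'f,'g) cform"
  | Ex nat "('o,'f,'g) cform"

fun cmp_sem :: "cmp \<Rightarrow> real \<Rightarrow> real \<Rightarrow> bool" where
  "cmp_sem CLt x y = (x < y)"
| "cmp_sem CLe x y = (x \<le> y)"
| "cmp_sem CEq x y = (x = y)"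
| "cmp_sem CGe x y = (x \<ge> y)"
| "cmp_sem CGt x y = (x > y)"

fun fv_trm :: "'o otrm \<Rightarrow> nat set" where
  "fv_trm (Var x) = {x}"
| "fv_trm (Obj _) = {}"

fun fv :: "('o,'f,'g) cform \<Rightarrow> nat set" where
  "fv TT = {}"
| "fv (RAtom F ts) = \<Union>(fv_trm ` set ts)"
| "fv (EqO t1 t2) = fv_trm t1 \<union> fv_trm t2"
| "fv (Clk g ts c v) = \<Union>(fv_trm ` set ts)"
| "fv (NatCmp c v w) = {}"
| "fv (Neg p) = fv p"
| "fv (Conj p q) = fv p \<union> fv q"
| "fv (Ex x p) = fv p - {x}"

fun time_indep :: "('o,'f,'g) cform \<Rightarrow> bool" where
  "time_indep (Clk g ts c v) = False"
| "time_indep (NatCmp c v w) = False"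
| "time_indep (Neg p) = time_indep p"
| "time_indep (Conj p q) = (time_indep p \<and> time_indep q)"
| "time_indep (Ex x p) = time_indep p"
| "time_indep _ = True"

fun nat_consts :: "('o,'f,'g) cform \<Rightarrow> nat set" where
  "nat_consts (Clk g ts c v) = {v}"
| "nat_consts (NatCmp c v w) = {v, w}"
| "nat_consts (Neg p) = nat_consts p"
| "nat_consts (Conj p q) = nat_consts p \<union> nat_consts q"
| "nat_consts (Ex x p) = nat_consts p"
| "nat_consts _ = {}"

fun subst_trm :: "nat \<Rightarrow> 'o \<Rightarrow> 'o otrm \<Rightarrow> 'o otrm" where
  "subst_trm x ob (Var y) = (if x = y then Obj ob else Var y)"
| "subst_trm x ob (Obj c) = Obj c"

fun subst :: "nat \<Rightarrow> 'o \<Rightarrow> ('o,'f,'g) cform \<Rightarrow> ('o,'f,'g) cform" where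
  "subst x ob TT = TT"
| "subst x ob (RAtom F ts) = RAtom F (map (subst_trm x ob) ts)"
| "subst x ob (EqO t1 t2) = EqO (subst_trm x ob t1) (subst_trm x ob t2)"
| "subst x ob (Clk g ts c v) = Clk g (map (subst_trm x ob) ts) c v"
| "subst x ob (NatCmp c v w) = NatCmp c v w"
| "subst x ob (Neg p) = Neg (subst x ob p)"
| "subst x ob (Conj p q) = Conj (subst x ob p) (subst x ob q)"
| "subst x ob (Ex y p) = (if x = y then Ex y p else Ex y (subst x ob p))"

section \<open>States (interpretation of the fluents in a situation) and evaluation\<close>

record ('o,'f,'g) fstate =
  frel :: "'f \<Rightarrow> 'o list \<Rightarrow> bool"
  fclk :: "'g \<Rightarrow> 'o list \<Rightarrow> real"

fun teval :: "(nat \<Rightarrow> 'o) \<Rightarrow> 'o otrm \<Rightarrow> 'o" where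
  "teval env (Var x) = env x"
| "teval env (Obj c) = c"

fun eval :: "('o,'f,'g) fstate \<Rightarrow> (nat \<Rightarrow> 'o) \<Rightarrow> ('o,'f,'g) cform \<Rightarrow> bool" where
  "eval st env TT = True"
| "eval st env (RAtom F ts) = frel st F (map (teval env) ts)"
| "eval st env (EqO t1 t2) = (teval env t1 = teval env t2)"
| "eval st env (Clk g ts c v) = cmp_sem c (fclk st g (map (teval env) ts)) (real v)"
| "eval st env (NatCmp c v w) = cmp_sem c (real v) (real w)"
| "eval st env (Neg p) = (\<not> eval st env p)"
| "eval st env (Conj p q) = (eval st env p \<and> eval st env q)"
| "eval st env (Ex x p) = (\<exists>ob. eval st (env(x := ob)) p)"

section \<open>Clocked basic action theories\<close>

text \<open>Actions: the non-wait action types 'a (finitely many, with arities) and wait(t).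
 Situations are represented by the list of actions performed, most recent first:
 S0 = [] and do(a,s) = a # s.\<close>

datatype ('o,'a) action = Act 'a "'o list" | Wait real

type_synonym ('o,'a) sit = "('o,'a) action list"

text \<open>A BAT, given by its components (successor state axioms and precondition axioms in
 normal form, split by action type):
 \<^item> init F os: truth value of F(os,S0) (complete initial information; clocks are 0 at S0);
 \<^item> poss A: right-hand side Pi_A(y_0..y_{m-1}) of Poss(A(y),s) (variables 0..m-1);
 \<^item> ssa F (Some A): right-hand side of F(x,do(A(y),s)), variables 0..n-1 for x, n..n+m-1 for y;
   ssa F None: right-hand side for the action wait(t) (cannot mention t, being clocked);
 \<^item> reset g A: the condition phi_g(x, A(y), s) resetting clock g (time-independent);
   for wait(t) every clock advances by t, and Poss(wait(t),s) is True.\<close>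

record ('o,'f,'g,'a) bat =
  rarity :: "'f \<Rightarrow> nat"
  farity :: "'g \<Rightarrow> nat"
  aarity :: "'a \<Rightarrow> nat"
  init   :: "'f \<Rightarrow> 'o list \<Rightarrow> bool"
  poss   :: "'a \<Rightarrow> ('o,'f,'g) cform"
  ssa    :: "'f \<Rightarrow> 'a option \<Rightarrow> ('o,'f,'g) cform"
  reset  :: "'g \<Rightarrow> 'a \<Rightarrow> ('o,'f,'g) cform"

fun arity_ok :: "('o,'f,'g,'a) bat \<Rightarrow> ('o,'f,'g) cform \<Rightarrow> bool" where
  "arity_ok D (RAtom F ts) = (length ts = rarity D F)"
| "arity_ok D (Clk g ts c v) = (length ts = farity D g)"
| "arity_ok D (Neg p) = arity_ok D p"
| "arity_ok D (Conj p q) = (arity_ok D p \<and> arity_ok D q)"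
| "arity_ok D (Ex x p) = arity_ok D p"
| "arity_ok D _ = True"

definition wf_form :: "('o,'f,'g,'a) bat \<Rightarrow> nat \<Rightarrow> ('o,'f,'g) cform \<Rightarrow> bool" where
  "wf_form D n p \<longleftrightarrow> fv p \<subseteq> {..<n} \<and> arity_ok D p"

definition clocked_bat :: "('o,'f,'g,'a) bat \<Rightarrow> bool" where
  "clocked_bat D \<longleftrightarrow>
     (\<forall>A. wf_form D (aarity D A) (poss D A)) \<and>
     (\<forall>F. wf_form D (rarity D F) (ssa D F None)) \<and>
     (\<forall>F A. wf_form D (rarity D F + aarity D A) (ssa D F (Some A))) \<and>
     (\<forall>g A. wf_form D (farity D g + aarity D A) (reset D g A) \<and> time_indep (reset D g A))"

definition bat_consts :: "('o,'f,'g,'a) bat \<Rightarrow> nat set" where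
  "bat_consts D = (\<Union>A. nat_consts (poss D A)) \<union> (\<Union>F a. nat_consts (ssa D F a))
                  \<union> (\<Union>g A. nat_consts (reset D g A))"

text \<open>The fluent values in a situation, as determined by D (D0 is complete, so this is the
 unique interpretation entailed by D).\<close>
primrec state_of :: "('o,'f,'g,'a) bat \<Rightarrow> ('o,'a) sit \<Rightarrow> ('o,'f,'g) fstate" where
  "state_of D [] = \<lparr>frel = init D, fclk = (\<lambda>g os. 0)\<rparr>"
| "state_of D (a # s) =
     (let st = state_of D s in
      case a of
        Wait t \<Rightarrow> \<lparr>frel = (\<lambda>F os. eval st (\<lambda>i. os ! i) (ssa D F None)),
                  fclk = (\<lambda>g os. fclk st g os + t)\<rparr>
      | Act A ys \<Rightarrow> \<lparr>frel = (\<lambda>F os. eval st (\<lambda>i. (os @ ys) ! i) (ssa D F (Some A))),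
                  fclk = (\<lambda>g os. if eval st (\<lambda>i. (os @ ys) ! i) (reset D g A) then 0
                                  else fclk st g os)\<rparr>)"

definition Poss :: "('o,'f,'g,'a) bat \<Rightarrow> ('o,'a) action \<Rightarrow> ('o,'a) sit \<Rightarrow> bool" where
  "Poss D a s = (case a of Wait t \<Rightarrow> True
                   | Act A os \<Rightarrow> eval (state_of D s) (\<lambda>i. os ! i) (poss D A))"

definition holds :: "('o,'f,'g,'a) bat \<Rightarrow> ('o,'a) sit \<Rightarrow> ('o,'f,'g) cform \<Rightarrow> bool" where
  "holds D s p \<longleftrightarrow> (\<forall>env. eval (state_of D s) env p)"

section \<open>Clock valuations and the region equivalence\<close>

definition clock_terms :: "('o,'f,'g,'a) bat \<Rightarrow> ('g \<times> 'o list) set" where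
  "clock_terms D = {(g, os). length os = farity D g}"

definition val :: "('o,'f,'g,'a) bat \<Rightarrow> ('o,'a) sit \<Rightarrow> ('g \<times> 'o list \<Rightarrow> real)" where
  "val D s = (\<lambda>(g, os). fclk (state_of D s) g os)"

definition simK :: "nat \<Rightarrow> real \<Rightarrow> real \<Rightarrow> bool" where
  "simK K u v \<longleftrightarrow> (u > real K \<and> v > real K) \<or>
      (u \<le> real K \<and> v \<le> real K \<and> \<lfloor>u\<rfloor> = \<lfloor>v\<rfloor> \<and> \<lceil>u\<rceil> = \<lceil>v\<rceil>)"

definition fractK :: "nat \<Rightarrow> real \<Rightarrow> real" where
  "fractK K v = (if v \<le> real K then v - of_int \<lfloor>v\<rfloor> else 0)"

definition region_eq :: "('g \<times> 'o list) set \<Rightarrow> nat \<Rightarrow> ('g \<times> 'o list \<Rightarrow> real)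
                          \<Rightarrow> ('g \<times> 'o list \<Rightarrow> real) \<Rightarrow> bool" where
  "region_eq C K \<nu> \<nu>' \<longleftrightarrow>
     (\<forall>w\<in>C. simK K (\<nu> w) (\<nu>' w)) \<and>
     (\<forall>w\<in>C. \<forall>w'\<in>C. (fractK K (\<nu> w) \<le> fractK K (\<nu> w')) \<longleftrightarrow> (fractK K (\<nu>' w) \<le> fractK K (\<nu>' w')))"

definition sit_equiv :: "('o,'f,'g,'a) bat \<Rightarrow> nat \<Rightarrow> ('o,'a) sit \<Rightarrow> ('o,'a) sit \<Rightarrow> bool" where
  "sit_equiv D K s1 s2 \<longleftrightarrow>
     (\<forall>F os. length os = rarity D F \<longrightarrow> frel (state_of D s1) F os = frel (state_of D s2) F os) \<and>
     region_eq (clock_terms D) K (val D s1) (val D s2)"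

definition sclass :: "('o,'f,'g,'a) bat \<Rightarrow> nat \<Rightarrow> ('o,'a) sit \<Rightarrow> ('o,'a) sit set" where
  "sclass D K s = {s'. sit_equiv D K s s'}"

definition tsuccs_ok :: "('o,'f,'g,'a) bat \<Rightarrow> nat \<Rightarrow>
                          (('g \<times> 'o list \<Rightarrow> real) \<Rightarrow> nat \<Rightarrow> real set) \<Rightarrow> bool" where
  "tsuccs_ok D K TS \<longleftrightarrow>
     (\<forall>\<nu>. (\<forall>w\<in>clock_terms D. \<nu> w \<ge> 0) \<longrightarrow>
        finite (TS \<nu> K) \<and> (\<forall>\<tau>\<in>TS \<nu> K. \<tau> \<ge> 0) \<and>
        (\<forall>\<tau>\<ge>0. \<exists>\<tau>'\<in>TS \<nu> K. region_eq (clock_terms D) K (\<lambda>w. \<nu> w + \<tau>) (\<lambda>w. \<nu> w + \<tau>')))"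

datatype ('o,'f,'g,'a) prog =
    PAct 'a "'o otrm list"
  | PWait
  | PTest "('o,'f,'g) cform"
  | PSeq "('o,'f,'g,'a) prog" "('o,'f,'g,'a) prog"
  | PChoice "('o,'f,'g,'a) prog" "('o,'f,'g,'a) prog"
  | PPi nat "('o,'f,'g,'a) prog"
  | PStar "('o,'f,'g,'a) prog"
  | PConc "('o,'f,'g,'a) prog" "('o,'f,'g,'a) prog"

definition pnil :: "('o,'f,'g,'a) prog" where
  "pnil = PTest TT"

fun psubst :: "nat \<Rightarrow> 'o \<Rightarrow> ('o,'f,'g,'a) prog \<Rightarrow> ('o,'f,'g,'a) prog" where
  "psubst x ob (PAct A ts) = PAct A (map (subst_trm x ob) ts)"
| "psubst x ob PWait = PWait"
| "psubst x ob (PTest p) = PTest (subst x ob p)"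
| "psubst x ob (PSeq d1 d2) = PSeq (psubst x ob d1) (psubst x ob d2)"
| "psubst x ob (PChoice d1 d2) = PChoice (psubst x ob d1) (psubst x ob d2)"
| "psubst x ob (PPi y d) = (if x = y then PPi y d else PPi y (psubst x ob d))"
| "psubst x ob (PStar d) = PStar (psubst x ob d)"
| "psubst x ob (PConc d1 d2) = PConc (psubst x ob d1) (psubst x ob d2)"

fun pfv :: "('o,'f,'g,'a) prog \<Rightarrow> nat set" where
  "pfv (PAct A ts) = \<Union>(fv_trm ` set ts)"
| "pfv PWait = {}"
| "pfv (PTest p) = fv p"
| "pfv (PSeq d1 d2) = pfv d1 \<union> pfv d2"
| "pfv (PChoice d1 d2) = pfv d1 \<union> pfv d2"
| "pfv (PPi y d) = pfv d - {y}"
| "pfv (PStar d) = pfv d"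
| "pfv (PConc d1 d2) = pfv d1 \<union> pfv d2"

fun parity_ok :: "('o,'f,'g,'a) bat \<Rightarrow> ('o,'f,'g,'a) prog \<Rightarrow> bool" where
  "parity_ok D (PAct A ts) = (length ts = aarity D A)"
| "parity_ok D PWait = True"
| "parity_ok D (PTest p) = arity_ok D p"
| "parity_ok D (PSeq d1 d2) = (parity_ok D d1 \<and> parity_ok D d2)"
| "parity_ok D (PChoice d1 d2) = (parity_ok D d1 \<and> parity_ok D d2)"
| "parity_ok D (PPi y d) = parity_ok D d"
| "parity_ok D (PStar d) = parity_ok D d"
| "parity_ok D (PConc d1 d2) = (parity_ok D d1 \<and> parity_ok D d2)"

definition wf_prog :: "('o,'f,'g,'a) bat \<Rightarrow> ('o,'f,'g,'a) prog \<Rightarrow> bool" where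
  "wf_prog D d \<longleftrightarrow> pfv d = {} \<and> parity_ok D d"

inductive Final :: "('o,'f,'g,'a) bat \<Rightarrow> ('o,'f,'g,'a) prog \<Rightarrow> ('o,'a) sit \<Rightarrow> bool"
  for D where
  "holds D s p \<Longrightarrow> Final D (PTest p) s"
| "Final D d1 s \<Longrightarrow> Final D d2 s \<Longrightarrow> Final D (PSeq d1 d2) s"
| "Final D d1 s \<Longrightarrow> Final D (PChoice d1 d2) s"
| "Final D d2 s \<Longrightarrow> Final D (PChoice d1 d2) s"
| "Final D (psubst x v d) s \<Longrightarrow> Final D (PPi x d) s"
| "Final D (PStar d) s"
| "Final D d1 s \<Longrightarrow> Final D d2 s \<Longrightarrow> Final D (PConc d1 d2) s"

inductive Trans :: "('o,'f,'g,'a) bat \<Rightarrow> ('o,'f,'g,'a) prog \<Rightarrow> ('o,'a) sit \<Rightarrow> ('o,'a) action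
                     \<Rightarrow> ('o,'f,'g,'a) prog \<Rightarrow> ('o,'a) sit \<Rightarrow> bool"
  for D where
  "Poss D (Act A os) s \<Longrightarrow> Trans D (PAct A (map Obj os)) s (Act A os) pnil (Act A os # s)"
| "Trans D PWait s (Wait t) pnil (Wait t # s)"
| "Trans D d1 s a g s' \<Longrightarrow> Trans D (PSeq d1 d2) s a (PSeq g d2) s'"
| "Final D d1 s \<Longrightarrow> Trans D d2 s a d' s' \<Longrightarrow> Trans D (PSeq d1 d2) s a d' s'"
| "Trans D d1 s a d' s' \<Longrightarrow> Trans D (PChoice d1 d2) s a d' s'"
| "Trans D d2 s a d' s' \<Longrightarrow> Trans D (PChoice d1 d2) s a d' s'"
| "Trans D (psubst x v d) s a d' s' \<Longrightarrow> Trans D (PPi x d) s a d' s'"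
| "Trans D d s a g s' \<Longrightarrow> Trans D (PStar d) s a (PSeq g (PStar d)) s'"
| "Trans D d1 s a g s' \<Longrightarrow> Trans D (PConc d1 d2) s a (PConc g d2) s'"
| "Trans D d2 s a g s' \<Longrightarrow> Trans D (PConc d1 d2) s a (PConc d1 g) s'"

section \<open>Algorithm 2\<close>

type_synonym ('o,'f,'g,'a) tstate = "('o,'a) sit set \<times> ('o,'f,'g,'a) prog"

type_synonym ('o,'f,'g,'a) config =
  "(('o,'a) sit \<times> ('o,'f,'g,'a) prog) set \<times> ('o,'f,'g,'a) tstate set
   \<times> (('o,'f,'g,'a) tstate \<times> ('o,'f,'g,'a) tstate) set"

definition Acts :: "('o,'f,'g,'a) bat \<Rightarrow> nat \<Rightarrow> (('g \<times> 'o list \<Rightarrow> real) \<Rightarrow> nat \<Rightarrow> real set)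
                    \<Rightarrow> ('o,'a) sit \<Rightarrow> ('o,'a) action set" where
  "Acts D K TS s = {Act A os | A os. length os = aarity D A} \<union> {Wait \<tau> | \<tau>. \<tau> \<in> TS (val D s) K}"

definition Succs :: "('o,'f,'g,'a) bat \<Rightarrow> nat \<Rightarrow> (('g \<times> 'o list \<Rightarrow> real) \<Rightarrow> nat \<Rightarrow> real set)
                    \<Rightarrow> ('o,'a) sit \<Rightarrow> ('o,'f,'g,'a) prog \<Rightarrow> (('o,'a) sit \<times> ('o,'f,'g,'a) prog) set" where
  "Succs D K TS s d = {(s', d'). \<exists>\<alpha>\<in>Acts D K TS s. Trans D d s \<alpha> d' s'}"

definition absq :: "('o,'f,'g,'a) bat \<Rightarrow> nat \<Rightarrow> ('o,'a) sit \<times> ('o,'f,'g,'a) prog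
                    \<Rightarrow> ('o,'f,'g,'a) tstate" where
  "absq D K = (\<lambda>(s, d). (sclass D K s, d))"

text \<open>One iteration of the while loop: some (s,d) is removed from Open; for every successor
 (s',d') (over all alpha in Acts) whose abstract state is not yet in V, the abstract state is
 added to V and ONE representative (the first one met by the inner loop, hence the set R of
 representatives, injective on abstract states) is added to Open; all edges are added to E.\<close>
definition alg_step :: "('o,'f,'g,'a) bat \<Rightarrow> nat \<Rightarrow> (('g \<times> 'o list \<Rightarrow> real) \<Rightarrow> nat \<Rightarrow> real set)
                        \<Rightarrow> ('o,'f,'g,'a) config \<Rightarrow> ('o,'f,'g,'a) config \<Rightarrow> bool" where
  "alg_step D K TS c c' \<longleftrightarrow>
     (case c of (Op, V, E) \<Rightarrow> case c' of (Op', V', E') \<Rightarrow>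
       (\<exists>s d R. (s, d) \<in> Op \<and>
          R \<subseteq> Succs D K TS s d \<and>
          inj_on (absq D K) R \<and>
          absq D K ` R = absq D K ` Succs D K TS s d - V \<and>
          Op' = (Op - {(s, d)}) \<union> R \<and>
          V' = V \<union> absq D K ` R \<and>
          E' = E \<union> {(absq D K (s, d), absq D K p) | p. p \<in> Succs D K TS s d}))"

definition init_config :: "('o,'f,'g,'a) prog \<Rightarrow> ('o,'f,'g,'a) config" where
  "init_config d0 = ({([], d0)}, {}, {})"

text \<open>All states of the transition system(s) produced by (any run of) Algorithm 2:
 the initial state together with every element ever put into V.\<close>
definition alg_states :: "('o,'f,'g,'a) bat \<Rightarrow> nat \<Rightarrow> (('g \<times> 'o list \<Rightarrow> real) \<Rightarrow> nat \<Rightarrow> real set)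
                          \<Rightarrow> ('o,'f,'g,'a) prog \<Rightarrow> ('o,'f,'g,'a) tstate set" where
  "alg_states D K TS d0 =
     insert (sclass D K [], d0)
       (\<Union>{V | Op V E. (alg_step D K TS)\<^sup>*\<^sup>* (init_config d0) (Op, V, E)})"

end

theory Submission
  imports Defs "HOL-Library.FuncSet"
begin

text \<open>Every situation met by the algorithm has nonnegative clocks, because the delays offered
  by TSuccs are nonnegative, and every program met is among the finitely many remaining programs
  of the input program.  On situations with nonnegative clocks the equivalence class is
  determined by finitely many data: the truth values of the finitely many ground relational
  atoms, and for each of the finitely many clock terms its value rounded with respect to K
  (one of finitely many values, as clocks are nonnegative) together with the ordering of the
  fractional parts.  So only finitely many abstract states can ever be created.\<close>

lemma size_subst_trm [simp]: "size (subst_trm x v t) = size t"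
  by (cases t) auto

lemma size_subst [simp]: "size (subst x v p) = size p"
  by (induction p) (auto simp: comp_def)

lemma size_psubst [simp]: "size (psubst x v d) = size d"
  by (induction d) (auto simp: comp_def)

function remaining_progs :: "('o,'f,'g,'a) prog \<Rightarrow> ('o,'f,'g,'a) prog set" where
  "remaining_progs (PAct A ts) = {PAct A ts, pnil}"
| "remaining_progs PWait = {PWait, pnil}"
| "remaining_progs (PTest p) = {PTest p}"
| "remaining_progs (PSeq d1 d2) = (\<lambda>g. PSeq g d2) ` remaining_progs d1 \<union> remaining_progs d2"
| "remaining_progs (PChoice d1 d2) = {PChoice d1 d2} \<union> remaining_progs d1 \<union> remaining_progs d2"
| "remaining_progs (PPi x d) = {PPi x d} \<union> (\<Union>v. remaining_progs (psubst x v d))"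
| "remaining_progs (PStar d) = {PStar d} \<union> (\<lambda>g. PSeq g (PStar d)) ` remaining_progs d"
| "remaining_progs (PConc d1 d2) =
     (\<lambda>(g1, g2). PConc g1 g2) ` (remaining_progs d1 \<times> remaining_progs d2)"
  by pat_completeness auto
termination by (relation "measure size") auto

lemma finite_remaining_progs: "finite (remaining_progs (d :: ('o::finite,'f,'g,'a) prog))"
  by (induction d rule: remaining_progs.induct) auto

lemma remaining_progs_self: "d \<in> remaining_progs d"
  by (induction d rule: remaining_progs.induct) auto

lemma remaining_progs_pnil [simp]: "remaining_progs pnil = {pnil}"
  by (simp add: pnil_def)

lemma remaining_progs_trans:
  "d \<in> remaining_progs d0 \<Longrightarrow> remaining_progs d \<subseteq> remaining_progs d0"
  by (induction d0 arbitrary: d rule: remaining_progs.induct) fastforce+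

lemma Trans_remaining_progs:
  "Trans D d s a d' s' \<Longrightarrow> d' \<in> remaining_progs d \<and> s' = a # s"
  by (induction rule: Trans.induct) (auto simp: remaining_progs_self)

lemma restrict_eq_restrict_iff: "restrict f A = restrict g A \<longleftrightarrow> (\<forall>x\<in>A. f x = g x)"
  by (metis restrict_apply' restrict_ext)

definition rounding :: "nat \<Rightarrow> real \<Rightarrow> bool \<times> int \<times> int" where
  "rounding K u = (if u > real K then (True, 0, 0) else (False, \<lfloor>u\<rfloor>, \<lceil>u\<rceil>))"

lemma simK_iff_rounding_eq: "simK K u v \<longleftrightarrow> rounding K u = rounding K v"
  unfolding simK_def rounding_def by auto

lemma rounding_nonneg: "0 \<le> u \<Longrightarrow> rounding K u \<in> UNIV \<times> {0..int K} \<times> {0..int K}"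
  using floor_mono[of u "real K"] by (auto simp: rounding_def ceiling_le_iff le_floor_iff)

definition region_sig :: "'c set \<Rightarrow> nat \<Rightarrow> ('c \<Rightarrow> real)
                          \<Rightarrow> ('c \<Rightarrow> bool \<times> int \<times> int) \<times> ('c \<times> 'c \<Rightarrow> bool)" where
  "region_sig C K \<nu> =
     (restrict (\<lambda>w. rounding K (\<nu> w)) C,
      restrict (\<lambda>(w, w'). fractK K (\<nu> w) \<le> fractK K (\<nu> w')) (C \<times> C))"

lemma region_eq_iff_region_sig_eq: "region_eq C K \<nu> \<nu>' \<longleftrightarrow> region_sig C K \<nu> = region_sig C K \<nu>'"
  unfolding region_eq_def region_sig_def by (auto simp: restrict_eq_restrict_iff simK_iff_rounding_eq)

lemma finite_region_sigs:
  assumes "finite C"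
  shows "finite (region_sig C K ` {\<nu>. \<forall>w\<in>C. 0 \<le> \<nu> w})"
proof (rule finite_subset)
  show "region_sig C K ` {\<nu>. \<forall>w\<in>C. 0 \<le> \<nu> w}
        \<subseteq> PiE C (\<lambda>_. UNIV \<times> {0..int K} \<times> {0..int K}) \<times> PiE (C \<times> C) (\<lambda>_. UNIV)"
    (is "_ \<subseteq> ?sigs")
    by (auto simp: region_sig_def restrict_PiE_iff rounding_nonneg)
  show "finite ?sigs"
    using assms by (intro finite_SigmaI finite_PiE) auto
qed

lemma finite_arity_instances: "finite {(c :: 'c::finite, os :: 'o::finite list). length os = n c}"
proof -
  have "{(c, os). length os = n c} = (\<Union>c. Pair c ` {os :: 'o list. length os = n c})"
    by auto
  then show ?thesis
    using finite_lists_length_eq[of "UNIV :: 'o set"] by simp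
qed

definition fluent_atoms :: "('o,'f,'g,'a) bat \<Rightarrow> ('f \<times> 'o list) set" where
  "fluent_atoms D = {(F, os). length os = rarity D F}"

definition sit_sig :: "('o,'f,'g,'a) bat \<Rightarrow> nat \<Rightarrow> ('o,'a) sit
    \<Rightarrow> ('f \<times> 'o list \<Rightarrow> bool) \<times> ('g \<times> 'o list \<Rightarrow> bool \<times> int \<times> int)
       \<times> (('g \<times> 'o list) \<times> ('g \<times> 'o list) \<Rightarrow> bool)" where
  "sit_sig D K s =
     (restrict (\<lambda>(F, os). frel (state_of D s) F os) (fluent_atoms D),
      region_sig (clock_terms D) K (val D s))"

lemma sit_equiv_iff_sit_sig_eq: "sit_equiv D K s s' \<longleftrightarrow> sit_sig D K s = sit_sig D K s'"
  unfolding sit_equiv_def sit_sig_def fluent_atoms_def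
  by (auto simp: restrict_eq_restrict_iff region_eq_iff_region_sig_eq)

lemma sclass_eq: "sclass D K s = {s'. sit_sig D K s' = sit_sig D K s}"
  unfolding sclass_def by (auto simp: sit_equiv_iff_sit_sig_eq)

definition nonneg_sits :: "('o,'f,'g,'a) bat \<Rightarrow> ('o,'a) sit set" where
  "nonneg_sits D = {s. \<forall>g os. 0 \<le> fclk (state_of D s) g os}"

lemma finite_sclass_nonneg_sits:
  fixes D :: "('o::finite,'f::finite,'g::finite,'a) bat"
  shows "finite (sclass D K ` nonneg_sits D)"
proof -
  have "sit_sig D K ` nonneg_sits D
        \<subseteq> PiE (fluent_atoms D) (\<lambda>_. UNIV)
           \<times> region_sig (clock_terms D) K ` {\<nu>. \<forall>w\<in>clock_terms D. 0 \<le> \<nu> w}"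
    by (auto simp: sit_sig_def nonneg_sits_def val_def)
  moreover have "finite (PiE (fluent_atoms D) (\<lambda>_. UNIV :: bool set))"
    unfolding fluent_atoms_def by (intro finite_PiE finite_arity_instances) auto
  moreover have "finite (region_sig (clock_terms D) K ` {\<nu>. \<forall>w\<in>clock_terms D. 0 \<le> \<nu> w})"
    unfolding clock_terms_def by (intro finite_region_sigs finite_arity_instances)
  ultimately have "finite (sit_sig D K ` nonneg_sits D)"
    by (meson finite_SigmaI finite_subset)
  then have "finite ((\<lambda>\<sigma>. {s'. sit_sig D K s' = \<sigma>}) ` sit_sig D K ` nonneg_sits D)"
    by blast
  then show ?thesis
    by (simp add: image_image sclass_eq)
qed

lemma Acts_nonneg_sits:
  assumes "s \<in> nonneg_sits D" and "tsuccs_ok D K TS" and "\<alpha> \<in> Acts D K TS s"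
  shows "\<alpha> # s \<in> nonneg_sits D"
proof (cases \<alpha>)
  case (Act A os)
  with assms(1) show ?thesis
    by (auto simp: nonneg_sits_def Let_def)
next
  case (Wait t)
  have "\<forall>w\<in>clock_terms D. 0 \<le> val D s w"
    using assms(1) by (auto simp: nonneg_sits_def val_def)
  with assms(2) have "\<forall>\<tau>\<in>TS (val D s) K. 0 \<le> \<tau>"
    unfolding tsuccs_ok_def by blast
  moreover have "t \<in> TS (val D s) K"
    using assms(3) Wait by (auto simp: Acts_def)
  ultimately show ?thesis
    using assms(1) Wait by (auto simp: nonneg_sits_def Let_def)
qed

definition node_bound :: "('o,'f,'g,'a) bat \<Rightarrow> ('o,'f,'g,'a) prog
                          \<Rightarrow> (('o,'a) sit \<times> ('o,'f,'g,'a) prog) set" where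
  "node_bound D d0 = nonneg_sits D \<times> remaining_progs d0"

lemma Succs_subset_node_bound:
  assumes "tsuccs_ok D K TS" and "(s, d) \<in> node_bound D d0"
  shows "Succs D K TS s d \<subseteq> node_bound D d0"
proof
  fix p assume "p \<in> Succs D K TS s d"
  then obtain s' d' \<alpha> where p: "p = (s', d')" and "\<alpha> \<in> Acts D K TS s" "Trans D d s \<alpha> d' s'"
    unfolding Succs_def by blast
  with assms show "p \<in> node_bound D d0"
    using Acts_nonneg_sits Trans_remaining_progs remaining_progs_trans
    unfolding node_bound_def by blast
qed

definition alg_invariant :: "('o,'f,'g,'a) bat \<Rightarrow> nat \<Rightarrow> ('o,'f,'g,'a) prog
                             \<Rightarrow> ('o,'f,'g,'a) config \<Rightarrow> bool" where
  "alg_invariant D K d0 c \<longleftrightarrow>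
     (case c of (Op, V, E) \<Rightarrow> Op \<subseteq> node_bound D d0 \<and> V \<subseteq> absq D K ` node_bound D d0)"

lemma alg_step_invariant:
  assumes "alg_step D K TS c c'" and "tsuccs_ok D K TS" and "alg_invariant D K d0 c"
  shows "alg_invariant D K d0 c'"
proof -
  obtain Op V E Op' V' E' where c: "c = (Op, V, E)" and c': "c' = (Op', V', E')"
    by (cases c, cases c') auto
  with assms(1) obtain s d R where
    sd: "(s, d) \<in> Op" and R: "R \<subseteq> Succs D K TS s d" and
    Op': "Op' = (Op - {(s, d)}) \<union> R" and V': "V' = V \<union> absq D K ` R"
    unfolding alg_step_def by auto
  from assms(3) c have "Op \<subseteq> node_bound D d0" "V \<subseteq> absq D K ` node_bound D d0"
    by (auto simp: alg_invariant_def)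
  moreover from this sd R have "R \<subseteq> node_bound D d0"
    using Succs_subset_node_bound[OF assms(2)] by blast
  ultimately show ?thesis
    unfolding c' alg_invariant_def Op' V' by blast
qed

lemma alg_invariant_reachable:
  assumes "(alg_step D K TS)\<^sup>*\<^sup>* (init_config d0) c" and "tsuccs_ok D K TS"
  shows "alg_invariant D K d0 c"
  using assms(1)
proof (induction rule: rtranclp_induct)
  case base
  have "([], d0) \<in> node_bound D d0"
    by (simp add: node_bound_def nonneg_sits_def remaining_progs_self)
  then show ?case
    by (simp add: init_config_def alg_invariant_def)
next
  case (step c c')
  with assms(2) show ?case
    using alg_step_invariant by blast
qed

lemma alg_states_subset_node_bound:
  assumes "tsuccs_ok D K TS"
  shows "alg_states D K TS d0 \<subseteq> absq D K ` node_bound D d0"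
proof -
  have "(sclass D K [], d0) \<in> absq D K ` node_bound D d0"
    by (force simp: absq_def node_bound_def nonneg_sits_def remaining_progs_self)
  moreover have "V \<subseteq> absq D K ` node_bound D d0"
    if "(alg_step D K TS)\<^sup>*\<^sup>* (init_config d0) (Op, V, E)" for Op V E
    using alg_invariant_reachable[OF that assms] by (simp add: alg_invariant_def)
  ultimately show ?thesis
    unfolding alg_states_def by blast
qed

lemma finite_absq_node_bound:
  fixes D :: "('o::finite,'f::finite,'g::finite,'a) bat"
  shows "finite (absq D K ` node_bound D d0)"
proof -
  have "absq D K ` node_bound D d0 = sclass D K ` nonneg_sits D \<times> remaining_progs d0"
    by (force simp: absq_def node_bound_def)
  then show ?thesis
    by (simp add: finite_sclass_nonneg_sits finite_remaining_progs)
qed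

theorem lemma9:
  fixes D :: "('o::finite, 'f::finite, 'g::finite, 'a::finite) bat"
    and d0 :: "('o, 'f, 'g, 'a) prog"
    and K :: nat
    and TS :: "('g \<times> 'o list \<Rightarrow> real) \<Rightarrow> nat \<Rightarrow> real set"
  assumes "clocked_bat D"
    and "wf_prog D d0"
    and "\<forall>v\<in>bat_consts D. v \<le> K"
    and "tsuccs_ok D K TS"
  shows "finite (alg_states D K TS d0)"
  using alg_states_subset_node_bound[OF assms(4)] finite_absq_node_bound
  by (rule finite_subset)

end
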